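(* Let $K$ be a field and let $P$ be a poset that is not locally finite. Then there is no locally finite poset $Q$ such that $FI(P)$ is isomorphic (as a $K$-algebra) to the incidence algebra $I(Q)$.
   Context: $K$ is a field, $P$ an arbitrary poset. $I(P)$ is the set of functions $\alpha$ assigning to each pair $x\le y$ in $P$ a value $\alpha(x,y)\in K$. An element $\alpha\in I(P)$ is a finitary series if for all $x<y$ in $P$ there are only finitely many pairs $(u,v)$ with $x\le u<v\le y$ and $\alpha(u,v)\neq0$; $FI(P)$ is the set of finitary series. $FI(P)$ is an associative $K$-algebra under pointwise addition and convolution $(\alpha\beta)(x,y)=\sum_{x\le z\le y}\alpha(x,z)\beta(z,y)$. A poset $Q$ is locally finite if every interval $[x,y]=\{z: x\le z\le y\}$ is finite; for such $Q$, $I(Q)$ (all functions on pairs $x\le y$ in $Q$) is the usual incidence algebra under convolution. *)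

theory Defs
  imports Main
begin

text \<open>A poset is given by a carrier set C and a relation le that is a partial order on C.
  Series are functions of two arguments that vanish outside the pairs x \<le> y in C.\<close>

definition poset_on :: "'a set \<Rightarrow> ('a \<Rightarrow> 'a \<Rightarrow> bool) \<Rightarrow> bool" where
  "poset_on C le \<longleftrightarrow> (\<forall>x\<in>C. le x x) \<and>
     (\<forall>x\<in>C. \<forall>y\<in>C. le x y \<and> le y x \<longrightarrow> x = y) \<and>
     (\<forall>x\<in>C. \<forall>y\<in>C. \<forall>z\<in>C. le x y \<and> le y z \<longrightarrow> le x z)"

definition locally_finite_on :: "'a set \<Rightarrow> ('a \<Rightarrow> 'a \<Rightarrow> bool) \<Rightarrow> bool" where
  "locally_finite_on C le \<longleftrightarrow> (\<forall>x\<in>C. \<forall>y\<in>C. finite {z\<in>C. le x z \<and> le z y})"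

definition incidence_space :: "'a set \<Rightarrow> ('a \<Rightarrow> 'a \<Rightarrow> bool) \<Rightarrow> ('a \<Rightarrow> 'a \<Rightarrow> 'k::zero) set" where
  "incidence_space C le = {\<alpha>. \<forall>x y. \<not> (x \<in> C \<and> y \<in> C \<and> le x y) \<longrightarrow> \<alpha> x y = 0}"

definition finitary_space :: "'a set \<Rightarrow> ('a \<Rightarrow> 'a \<Rightarrow> bool) \<Rightarrow> ('a \<Rightarrow> 'a \<Rightarrow> 'k::zero) set" where
  "finitary_space C le = {\<alpha> \<in> incidence_space C le.
     \<forall>x\<in>C. \<forall>y\<in>C. le x y \<and> x \<noteq> y \<longrightarrow>
       finite {(u, v). u \<in> C \<and> v \<in> C \<and> le x u \<and> le u v \<and> u \<noteq> v \<and> le v y \<and> \<alpha> u v \<noteq> 0}}"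

text \<open>Convolution. The sum ranges over the z in [x,y] with nonzero summand; for finitary
  series (and for locally finite posets) this set is finite, so this is the usual sum.\<close>
definition conv :: "'a set \<Rightarrow> ('a \<Rightarrow> 'a \<Rightarrow> bool) \<Rightarrow> ('a \<Rightarrow> 'a \<Rightarrow> 'k::field)
    \<Rightarrow> ('a \<Rightarrow> 'a \<Rightarrow> 'k) \<Rightarrow> ('a \<Rightarrow> 'a \<Rightarrow> 'k)" where
  "conv C le \<alpha> \<beta> = (\<lambda>x y. if x \<in> C \<and> y \<in> C \<and> le x y then
      (\<Sum>z \<in> {z \<in> C. le x z \<and> le z y \<and> \<alpha> x z * \<beta> z y \<noteq> 0}. \<alpha> x z * \<beta> z y) else 0)"

definition alg_iso :: "'a set \<Rightarrow> ('a \<Rightarrow> 'a \<Rightarrow> bool) \<Rightarrow> ('a \<Rightarrow> 'a \<Rightarrow> 'k::field) set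
    \<Rightarrow> 'b set \<Rightarrow> ('b \<Rightarrow> 'b \<Rightarrow> bool) \<Rightarrow> ('b \<Rightarrow> 'b \<Rightarrow> 'k) set
    \<Rightarrow> (('a \<Rightarrow> 'a \<Rightarrow> 'k) \<Rightarrow> ('b \<Rightarrow> 'b \<Rightarrow> 'k)) \<Rightarrow> bool" where
  "alg_iso C le A D le' B \<phi> \<longleftrightarrow> bij_betw \<phi> A B \<and>
     (\<forall>\<alpha>\<in>A. \<forall>\<beta>\<in>A. \<phi> (\<lambda>x y. \<alpha> x y + \<beta> x y) = (\<lambda>x y. \<phi> \<alpha> x y + \<phi> \<beta> x y)) \<and>
     (\<forall>\<alpha>\<in>A. \<forall>\<beta>\<in>A. \<phi> (conv C le \<alpha> \<beta>) = conv D le' (\<phi> \<alpha>) (\<phi> \<beta>)) \<and>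
     (\<forall>c. \<forall>\<alpha>\<in>A. \<phi> (\<lambda>x y. c * \<alpha> x y) = (\<lambda>x y. c * \<phi> \<alpha> x y))"

end

theory Submission
  imports Defs
begin

(* Call a family of pairs (A i, B i), i \<in> Z, together with a nonzero
   series e, orthogonal if  A i * B j = e  for i = j and  = 0  otherwise (convolution).
   (1) If [x,y] is an infinite interval of P, the matrix units  e_xz, e_zy  (z \<in> [x,y])
       form an infinite orthogonal family of finitary series with  e = e_xy \<noteq> 0.
   (2) An algebra isomorphism carries orthogonal families to orthogonal families.
   (3) In I(Q) with Q locally finite, pick (u,v) with  e u v \<noteq> 0; evaluating the relations
       at (u,v) gives vectors  r_i = A i u _  and  s_j = B j _ v  in K^W, W = [u,v] finite,
       with  <r_i, s_j> = e u v \<cdot> \<delta>_ij.  Such a biorthogonal system has at most card W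
       members (a rank bound, proved by Gaussian elimination), so Z is finite.
   Hence FI(P) \<cong> I(Q) would give an infinite orthogonal family in I(Q): a contradiction. *)

text \<open>Induction on W: eliminate the coordinate w0
  from all r i using one r k with  r k w0 \<noteq> 0, which leaves a system indexed by I - {k}.\<close>
lemma biorthogonal_card_le:
  fixes r s :: "'i \<Rightarrow> 'w \<Rightarrow> 'k::field"
  assumes "finite W" and "finite I" and "c \<noteq> 0"
    and "\<forall>i\<in>I. \<forall>j\<in>I. (\<Sum>w\<in>W. r i w * s j w) = (if i = j then c else 0)"
  shows "card I \<le> card W"
  using assms
proof (induction W arbitrary: I r rule: finite_induct)
  case empty
  have "I = {}"
  proof (rule equals0I)
    fix i assume "i \<in> I"
    then have "(\<Sum>w\<in>{}. r i w * s i w) = (if i = i then c else 0)"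
      using empty.prems(3) by blast
    then show False using empty.prems(2) by simp
  qed
  then show ?case by simp
next
  case (insert w0 W)
  show ?case
  proof (cases "\<forall>i\<in>I. r i w0 = 0")
    case True
    then have "\<forall>i\<in>I. \<forall>j\<in>I. (\<Sum>w\<in>W. r i w * s j w) = (if i = j then c else 0)"
      using insert.prems(3) insert.hyps by auto
    with insert.IH[of I r] insert.prems insert.hyps show ?thesis by simp
  next
    case False
    then obtain k where k: "k \<in> I" "r k w0 \<noteq> 0" by auto
    define r' where "r' = (\<lambda>i w. r i w - (r i w0 / r k w0) * r k w)"
    have "\<forall>i\<in>I - {k}. \<forall>j\<in>I - {k}. (\<Sum>w\<in>W. r' i w * s j w) = (if i = j then c else 0)"
    proof (intro ballI)
      fix i j assume i: "i \<in> I - {k}" and j: "j \<in> I - {k}"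
      have "r' i w0 = 0" using k by (simp add: r'_def)
      then have "(\<Sum>w\<in>W. r' i w * s j w) = (\<Sum>w\<in>insert w0 W. r' i w * s j w)"
        using insert.hyps by simp
      also have "\<dots> = (\<Sum>w\<in>insert w0 W. r i w * s j w)
                       - (r i w0 / r k w0) * (\<Sum>w\<in>insert w0 W. r k w * s j w)"
        by (simp add: r'_def algebra_simps sum_subtractf sum_distrib_left)
      also have "\<dots> = (if i = j then c else 0)"
        using insert.prems(3) i j k by auto
      finally show "(\<Sum>w\<in>W. r' i w * s j w) = (if i = j then c else 0)" .
    qed
    then have "card (I - {k}) \<le> card W"
      using insert.IH[of "I - {k}" r'] insert.prems(1,2) by blast
    then show ?thesis using k insert.prems(1) insert.hyps by simp
  qed
qed

definition orthogonal_family :: "'a set \<Rightarrow> ('a \<Rightarrow> 'a \<Rightarrow> bool) \<Rightarrow> ('i \<Rightarrow> 'a \<Rightarrow> 'a \<Rightarrow> 'k::field)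
    \<Rightarrow> ('i \<Rightarrow> 'a \<Rightarrow> 'a \<Rightarrow> 'k) \<Rightarrow> ('a \<Rightarrow> 'a \<Rightarrow> 'k) \<Rightarrow> 'i set \<Rightarrow> bool" where
  "orthogonal_family C le A B e Z \<longleftrightarrow>
     (\<forall>i\<in>Z. \<forall>j\<in>Z. conv C le (A i) (B j) = (if i = j then e else (\<lambda>u v. 0)))"

lemma orthogonal_family_finite:
  fixes A B :: "'i \<Rightarrow> 'b \<Rightarrow> 'b \<Rightarrow> 'k::field"
  assumes lf: "locally_finite_on Q le'"
    and orth: "orthogonal_family Q le' A B e Z" and e_nz: "e \<noteq> (\<lambda>u v. 0)"
  shows "finite Z"
proof (cases "Z = {}")
  case False
  then obtain z0 where z0: "z0 \<in> Z" by blast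
  obtain u v where uv: "e u v \<noteq> 0" using e_nz by blast
  have e_conv: "e = conv Q le' (A z0) (B z0)"
    using orth z0 unfolding orthogonal_family_def by simp
  have uvQ: "u \<in> Q" "v \<in> Q" "le' u v"
    using uv unfolding e_conv by (auto simp: conv_def split: if_splits)
  define W where "W = {w\<in>Q. le' u w \<and> le' w v}"
  have finW: "finite W" using lf uvQ unfolding locally_finite_on_def W_def by blast
  have entry: "conv Q le' (A i) (B j) u v = (\<Sum>w\<in>W. A i u w * B j w v)" for i j
  proof -
    have "conv Q le' (A i) (B j) u v
        = (\<Sum>w\<in>{w \<in> Q. le' u w \<and> le' w v \<and> A i u w * B j w v \<noteq> 0}. A i u w * B j w v)"
      using uvQ by (simp add: conv_def)
    also have "\<dots> = (\<Sum>w\<in>W. A i u w * B j w v)"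
      by (rule sum.mono_neutral_left) (use finW in \<open>auto simp: W_def\<close>)
    finally show ?thesis .
  qed
  have bound: "card I \<le> card W" if "I \<subseteq> Z" "finite I" for I
  proof (rule biorthogonal_card_le[OF finW \<open>finite I\<close> uv])
    show "\<forall>i\<in>I. \<forall>j\<in>I. (\<Sum>w\<in>W. A i u w * B j w v) = (if i = j then e u v else 0)"
    proof (intro ballI)
      fix i j assume "i \<in> I" "j \<in> I"
      then have "conv Q le' (A i) (B j) = (if i = j then e else (\<lambda>u v. 0))"
        using orth \<open>I \<subseteq> Z\<close> unfolding orthogonal_family_def by blast
      then show "(\<Sum>w\<in>W. A i u w * B j w v) = (if i = j then e u v else 0)"
        by (simp add: entry[symmetric])
    qed
  qed
  show ?thesis
  proof (rule ccontr)
    assume "infinite Z"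
    then obtain I where I: "I \<subseteq> Z" "finite I" "card I = Suc (card W)"
      by (meson infinite_arbitrarily_large)
    from bound[OF I(1,2)] I(3) show False by simp
  qed
qed simp

lemma alg_iso_zero:
  assumes "alg_iso C le A D le' B \<phi>" and "\<alpha> \<in> A"
  shows "\<phi> (\<lambda>u v. 0) = (\<lambda>u v. 0)"
proof -
  have "\<phi> (\<lambda>u v. 0 * \<alpha> u v) = (\<lambda>u v. 0 * \<phi> \<alpha> u v)"
    using assms unfolding alg_iso_def by blast
  then show ?thesis by simp
qed

lemma alg_iso_orthogonal_family:
  assumes iso: "alg_iso C le A D le' B \<phi>" and zero: "(\<lambda>u v. 0) \<in> A"
    and AB: "\<And>i. i \<in> Z \<Longrightarrow> F i \<in> A \<and> G i \<in> A" and e: "e \<in> A" "e \<noteq> (\<lambda>u v. 0)"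
    and orth: "orthogonal_family C le F G e Z"
  shows "orthogonal_family D le' (\<lambda>i. \<phi> (F i)) (\<lambda>i. \<phi> (G i)) (\<phi> e) Z"
    and "\<phi> e \<noteq> (\<lambda>u v. 0)"
proof -
  have phi0: "\<phi> (\<lambda>u v. 0) = (\<lambda>u v. 0)" by (rule alg_iso_zero[OF iso zero])
  have mult: "\<phi> (conv C le \<alpha> \<beta>) = conv D le' (\<phi> \<alpha>) (\<phi> \<beta>)" if "\<alpha> \<in> A" "\<beta> \<in> A" for \<alpha> \<beta>
    using iso that unfolding alg_iso_def by blast
  show "orthogonal_family D le' (\<lambda>i. \<phi> (F i)) (\<lambda>i. \<phi> (G i)) (\<phi> e) Z"
    using orth AB phi0 unfolding orthogonal_family_def by (simp add: mult[symmetric])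
  have "inj_on \<phi> A" using iso bij_betw_imp_inj_on unfolding alg_iso_def by auto
  show "\<phi> e \<noteq> (\<lambda>u v. 0)"
  proof
    assume "\<phi> e = (\<lambda>u v. 0)"
    then have "\<phi> e = \<phi> (\<lambda>u v. 0)" using phi0 by simp
    with \<open>inj_on \<phi> A\<close> have "e = (\<lambda>u v. 0)" using e(1) zero by (rule inj_onD)
    with e(2) show False ..
  qed
qed

definition unit_series :: "'a \<Rightarrow> 'a \<Rightarrow> 'a \<Rightarrow> 'a \<Rightarrow> 'k::field" where
  "unit_series p q = (\<lambda>u v. if u = p \<and> v = q then 1 else 0)"

lemma unit_series_nonzero: "unit_series p q \<noteq> (\<lambda>u v. 0 :: 'k::field)"
  by (metis unit_series_def one_neq_zero)

lemma zero_finitary: "(\<lambda>u v. 0) \<in> finitary_space C le"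
  by (auto simp: finitary_space_def incidence_space_def)

lemma unit_series_finitary:
  assumes "p \<in> C" "q \<in> C" "le p q"
  shows "(unit_series p q :: 'a \<Rightarrow> 'a \<Rightarrow> 'k::field) \<in> finitary_space C le"
proof -
  have "{(u, v). u \<in> C \<and> v \<in> C \<and> le x u \<and> le u v \<and> u \<noteq> v \<and> le v y
          \<and> (unit_series p q :: 'a \<Rightarrow> 'a \<Rightarrow> 'k) u v \<noteq> 0} \<subseteq> {(p, q)}" for x y
    by (auto simp: unit_series_def split: if_splits)
  then show ?thesis using assms
    by (auto simp: finitary_space_def incidence_space_def unit_series_def intro: finite_subset)
qed

lemma conv_unit_series:
  assumes "poset_on C le" "x \<in> C" "y \<in> C" "z \<in> C" "z' \<in> C"
    and "le x z" "le z y" "le x z'" "le z' y"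
  shows "conv C le (unit_series x z) (unit_series z' y)
       = (if z = z' then unit_series x y else (\<lambda>u v. 0 :: 'k::field))"
proof (intro ext)
  fix u v
  have "le x y" using assms unfolding poset_on_def by blast
  moreover have "{w \<in> C. le u w \<and> le w v \<and> (unit_series x z u w :: 'k) * unit_series z' y w v \<noteq> 0}
        = (if u = x \<and> v = y \<and> z = z' then {z} else {})"
    using assms by (auto simp: unit_series_def split: if_splits)
  ultimately show "conv C le (unit_series x z) (unit_series z' y) u v
       = (if z = z' then unit_series x y else (\<lambda>u v. 0)) u v"
    using assms by (auto simp: conv_def unit_series_def)
qed

lemma unit_series_orthogonal_family:
  assumes "poset_on C le" "x \<in> C" "y \<in> C"
  shows "orthogonal_family C le (\<lambda>z. unit_series x z) (\<lambda>z. unit_series z y)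
           (unit_series x y :: 'a \<Rightarrow> 'a \<Rightarrow> 'k::field) {z\<in>C. le x z \<and> le z y}"
  unfolding orthogonal_family_def
proof (intro ballI)
  fix z z' assume "z \<in> {z\<in>C. le x z \<and> le z y}" "z' \<in> {z\<in>C. le x z \<and> le z y}"
  then show "conv C le (unit_series x z) (unit_series z' y)
           = (if z = z' then unit_series x y else (\<lambda>u v. 0 :: 'k))"
    using conv_unit_series[OF assms] by blast
qed

theorem corollary5:
  fixes P :: "'a set" and le :: "'a \<Rightarrow> 'a \<Rightarrow> bool"
    and Q :: "'b set" and le' :: "'b \<Rightarrow> 'b \<Rightarrow> bool"
  assumes "poset_on P le" and "\<not> locally_finite_on P le"
    and "poset_on Q le'" and "locally_finite_on Q le'"
  shows "\<not> (\<exists>\<phi> :: ('a \<Rightarrow> 'a \<Rightarrow> 'k::field) \<Rightarrow> ('b \<Rightarrow> 'b \<Rightarrow> 'k).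
            alg_iso P le (finitary_space P le) Q le' (incidence_space Q le') \<phi>)"
proof
  assume "\<exists>\<phi> :: ('a \<Rightarrow> 'a \<Rightarrow> 'k::field) \<Rightarrow> ('b \<Rightarrow> 'b \<Rightarrow> 'k).
            alg_iso P le (finitary_space P le) Q le' (incidence_space Q le') \<phi>"
  then obtain \<phi> :: "('a \<Rightarrow> 'a \<Rightarrow> 'k) \<Rightarrow> ('b \<Rightarrow> 'b \<Rightarrow> 'k)"
    where iso: "alg_iso P le (finitary_space P le) Q le' (incidence_space Q le') \<phi>" by blast
  obtain x y where xy: "x \<in> P" "y \<in> P" and inf: "infinite {z\<in>P. le x z \<and> le z y}"
    using assms(2) unfolding locally_finite_on_def by blast
  define Z where "Z = {z\<in>P. le x z \<and> le z y}"
  obtain z0 where "z0 \<in> Z" using inf unfolding Z_def by (metis finite.emptyI ex_in_conv)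
  then have "le x y" using assms(1) xy unfolding poset_on_def Z_def by blast
  then have units: "unit_series x z \<in> finitary_space P le \<and> unit_series z y \<in> finitary_space P le"
    if "z \<in> Z" for z
    using that xy unfolding Z_def by (auto intro: unit_series_finitary)
  have orth: "orthogonal_family P le (\<lambda>z. unit_series x z) (\<lambda>z. unit_series z y)
                (unit_series x y :: 'a \<Rightarrow> 'a \<Rightarrow> 'k) Z"
    unfolding Z_def by (rule unit_series_orthogonal_family[OF assms(1) xy])
  note transfer = alg_iso_orthogonal_family[OF iso zero_finitary units
            unit_series_finitary[where le=le, OF xy \<open>le x y\<close>] unit_series_nonzero orth]
  have "finite Z" by (rule orthogonal_family_finite[OF assms(4) transfer])
  with inf show False unfolding Z_def by contradiction
qed

end
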